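(* Let $d\geq 2$ and $m\geq 1$ be integers, let $p=\frac{d+1}{d+m}$, and let $$Z=p\,\frac{I_d}{d}+(1-p)\,\frac{J_d}{d},$$ where $I_d$ is the $d\times d$ identity matrix and $J_d$ is the $d\times d$ matrix all of whose entries equal $1$. Then there exists an extreme point $\Phi$ of the convex set $\mathcal{CP}\!\left(M_d,M_{d+m};\,Z,\,\frac{I_{d+m}}{d+m}\right)$ whose Choi rank equals $d+m$.
   Context: $M_n$ denotes the algebra of complex $n\times n$ matrices. For positive semidefinite $A\in M_{d_1}$ and $B\in M_{d_2}$, $\mathcal{CP}(M_{d_1},M_{d_2};A,B)$ denotes the convex set of all completely positive linear maps $\Phi:M_{d_1}\to M_{d_2}$ such that $\Phi(I_{d_1})=B$ and $\Phi^*(I_{d_2})=A$, where $\Phi^*$ is the adjoint of $\Phi$ with respect to the Hilbert–Schmidt inner product; equivalently, $\Phi(X)=\sum_i K_iXK_i^\dagger$ with $d_2\times d_1$ matrices $K_i$ satisfying $\sum_i K_i^\dagger K_i=A$ and $\sum_i K_iK_i^\dagger=B$. An extreme point of a convex set $\mathcal{K}$ is an element $\Phi\in\mathcal{K}$ such that $\Phi=t\Phi_1+(1-t)\Phi_2$ with $\Phi_1,\Phi_2\in\mathcal{K}$, $t\in(0,1)$ implies $\Phi_1=\Phi_2=\Phi$. The Choi rank of $\Phi:M_{d_1}\to M_{d_2}$ is the rank of its Choi matrix $\sum_{r,s=1}^{d_1}E_{rs}\otimes\Phi(E_{rs})$ (equivalently, the minimal number of Kraus operators of $\Phi$), where $E_{rs}$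 are the matrix units. *)

theory Defs
  imports "Jordan_Normal_Form.Schur_Decomposition" "Jordan_Normal_Form.DL_Rank"
begin

text \<open>Linear maps M_{d1} -> M_{d2} are modelled as functions on complex matrices;
  only their values on carrier_mat d1 d1 matter.\<close>

definition completely_positive :: "nat \<Rightarrow> nat \<Rightarrow> (complex mat \<Rightarrow> complex mat) \<Rightarrow> bool" where
  "completely_positive d1 d2 \<Phi> \<longleftrightarrow>
     (\<exists>Ks. set Ks \<subseteq> carrier_mat d2 d1 \<and>
        (\<forall>X \<in> carrier_mat d1 d1.
           \<Phi> X = foldr (\<lambda>K acc. K * X * mat_adjoint K + acc) Ks (0\<^sub>m d2 d2)))"

definition mtrace :: "complex mat \<Rightarrow> complex" where
  "mtrace A = (\<Sum>i<dim_row A. A $$ (i, i))"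

text \<open>Phi^*(I) = A, with Phi^* the Hilbert-Schmidt adjoint:
  <A, X> = <I, Phi X> for all X, i.e. tr(A^dagger X) = tr(Phi X).\<close>
definition hs_adjoint_at_identity :: "nat \<Rightarrow> (complex mat \<Rightarrow> complex mat) \<Rightarrow> complex mat \<Rightarrow> bool" where
  "hs_adjoint_at_identity d1 \<Phi> A \<longleftrightarrow>
     (\<forall>X \<in> carrier_mat d1 d1. mtrace (mat_adjoint A * X) = mtrace (\<Phi> X))"

definition CP_set :: "nat \<Rightarrow> nat \<Rightarrow> complex mat \<Rightarrow> complex mat \<Rightarrow> (complex mat \<Rightarrow> complex mat) set" where
  "CP_set d1 d2 A B = {\<Phi>. completely_positive d1 d2 \<Phi> \<and> \<Phi> (1\<^sub>m d1) = B \<and>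
                          hs_adjoint_at_identity d1 \<Phi> A}"

text \<open>Two maps are identified when they agree on M_{d1}.\<close>
definition extreme_point_maps :: "nat \<Rightarrow> (complex mat \<Rightarrow> complex mat) set \<Rightarrow> (complex mat \<Rightarrow> complex mat) \<Rightarrow> bool" where
  "extreme_point_maps d1 K \<Phi> \<longleftrightarrow> \<Phi> \<in> K \<and>
     (\<forall>\<Phi>1 \<in> K. \<forall>\<Phi>2 \<in> K. \<forall>t::real. 0 < t \<and> t < 1 \<and>
        (\<forall>X \<in> carrier_mat d1 d1. \<Phi> X = complex_of_real t \<cdot>\<^sub>m \<Phi>1 X + complex_of_real (1 - t) \<cdot>\<^sub>m \<Phi>2 X)
        \<longrightarrow> (\<forall>X \<in> carrier_mat d1 d1. \<Phi>1 X = \<Phi> X \<and> \<Phi>2 X = \<Phi> X))"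

definition mat_unit :: "nat \<Rightarrow> nat \<Rightarrow> nat \<Rightarrow> complex mat" where
  "mat_unit d r s = mat d d (\<lambda>(i,j). if i = r \<and> j = s then 1 else 0)"

text \<open>Choi matrix sum_{r,s} E_rs \<otimes> Phi(E_rs), written entrywise:
  entry ((r,a),(s,b)) with row index r*d2+a and column index s*d2+b is Phi(E_rs)_{ab}.\<close>
definition choi_matrix :: "nat \<Rightarrow> nat \<Rightarrow> (complex mat \<Rightarrow> complex mat) \<Rightarrow> complex mat" where
  "choi_matrix d1 d2 \<Phi> = mat (d1 * d2) (d1 * d2)
     (\<lambda>(i,j). \<Phi> (mat_unit d1 (i div d2) (j div d2)) $$ (i mod d2, j mod d2))"

definition choi_rank :: "nat \<Rightarrow> nat \<Rightarrow> (complex mat \<Rightarrow> complex mat) \<Rightarrow> nat" where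
  "choi_rank d1 d2 \<Phi> = vec_space.rank (d1 * d2) (choi_matrix d1 d2 \<Phi>)"

definition all_ones_mat :: "nat \<Rightarrow> complex mat" where
  "all_ones_mat d = mat d d (\<lambda>_. 1)"

end

theory Submission
  imports Defs "Jordan_Normal_Form.DL_Rank_Submatrix"
begin

text \<open>
  A map \<open>\<Phi>(X) = \<Sum>\<^sub>a K\<^sub>a X K\<^sub>a\<^sup>\<dagger>\<close> whose Kraus operators \<open>K\<^sub>a = e\<^sub>a v\<^sub>a\<^sup>T\<close> (\<open>a < n\<close>)
  each have a single nonzero row is diagonal, with entries \<open>v\<^sub>a\<^sup>T X conj(v\<^sub>a)\<close>.
  If \<open>\<Phi> = t \<Phi>\<^sub>1 + (1 - t) \<Phi>\<^sub>2\<close>, evaluating on \<open>y y\<^sup>\<dagger>\<close> with \<open>y\<close> orthogonal to \<open>v\<^sub>a\<close> shows that row \<open>a\<close> of every Kraus operator of \<open>\<Phi>\<^sub>1\<close> is a multiple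
  of \<open>v\<^sub>a\<close>. Then entry \<open>(a,b)\<close> of \<open>\<Phi>\<^sub>1(X)\<close> is \<open>M\<^sub>a\<^sub>b v\<^sub>a\<^sup>T X v\<^sub>b\<close> for a matrix \<open>M\<close>
  independent of \<open>X\<close>, and if no inner product \<open>\<langle>v\<^sub>a, v\<^sub>b\<rangle>\<close> vanishes, \<open>\<Phi>\<^sub>1(I) = \<Phi>(I)\<close>
  forces \<open>M = I\<close>, i.e. \<open>\<Phi>\<^sub>1 = \<Phi>\<close>. The Choi matrix of \<open>\<Phi>\<close> is a sum of \<open>n\<close> rank-one
  matrices with an invertible diagonal \<open>n \<times> n\<close> minor, so its rank is \<open>n\<close>.

  For the theorem take \<open>n = d + m\<close> and \<open>v\<^sub>a = u\<^sub>a / \<surd>(d + m)\<close>, where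
  \<open>u\<^sub>0, \<dots>, u\<^sub>d\<^sub>-\<^sub>1, -u\<^sub>d\<close> are the vertices of a regular simplex of unit vectors in \<open>\<real>\<^sup>d\<close>
  and \<open>u\<^sub>a = u\<^sub>d\<close> for \<open>a \<ge> d\<close>. All inner products \<open>u\<^sub>a \<cdot> u\<^sub>b\<close> are \<open>1\<close> or \<open>\<plusminus>1/d\<close>, hence
  nonzero, and \<open>\<Phi>(I) = I/(d + m)\<close>; finally \<open>\<Sum>\<^sub>a u\<^sub>a u\<^sub>a\<^sup>T = ((d + 1) I + (m - 1) J)/d\<close>
  gives \<open>\<Phi>\<^sup>*(I) = Z\<close>.
\<close>

section \<open>Kraus sums\<close>

abbreviation kraus_sum :: "nat \<Rightarrow> complex mat list \<Rightarrow> complex mat \<Rightarrow> complex mat" where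
  "kraus_sum n Ks X \<equiv> foldr (\<lambda>K acc. K * X * mat_adjoint K + acc) Ks (0\<^sub>m n n)"

definition sesq_form :: "nat \<Rightarrow> (nat \<Rightarrow> complex) \<Rightarrow> complex mat \<Rightarrow> (nat \<Rightarrow> complex) \<Rightarrow> complex" where
  "sesq_form d x X y = (\<Sum>r<d. \<Sum>s<d. x r * X $$ (r,s) * cnj (y s))"

lemma mat_adjoint_carrier: "A \<in> carrier_mat n d \<Longrightarrow> mat_adjoint A \<in> carrier_mat d n"
  unfolding mat_adjoint_def by auto

lemma index_mat_adjoint:
  "i < dim_col A \<Longrightarrow> j < dim_row A \<Longrightarrow> mat_adjoint A $$ (i,j) = cnj (A $$ (j,i))"
  unfolding mat_adjoint_def by (simp add: mat_of_rows_def)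

lemma index_mult_mat_sum:
  "i < dim_row A \<Longrightarrow> j < dim_col B \<Longrightarrow> dim_col A = dim_row B \<Longrightarrow>
    (A * B) $$ (i,j) = (\<Sum>k<dim_row B. A $$ (i,k) * B $$ (k,j))"
  by (simp add: scalar_prod_def atLeast0LessThan)

lemma sum_mult_delta:
  fixes f :: "nat \<Rightarrow> 'a::semiring_0"
  shows "k < d \<Longrightarrow> (\<Sum>r<d. f r * (if r = k then c else 0)) = f k * c"
  by (simp add: if_distrib[of "\<lambda>z. f _ * z"] cong: if_cong)

lemma kraus_sum_carrier:
  assumes "set Ks \<subseteq> carrier_mat n d" and "X \<in> carrier_mat d d"
  shows "kraus_sum n Ks X \<in> carrier_mat n n"
  using assms(1) by (induction Ks) (auto intro!: mult_carrier_mat mat_adjoint_carrier assms(2))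

lemma index_kraus_term:
  assumes K: "K \<in> carrier_mat n d" and X: "X \<in> carrier_mat d d" and i: "i < n" and j: "j < n"
  shows "(K * X * mat_adjoint K) $$ (i,j) = sesq_form d (\<lambda>r. K $$ (i,r)) X (\<lambda>s. K $$ (j,s))"
proof -
  have "(K * X * mat_adjoint K) $$ (i,j) = (\<Sum>s<d. (K * X) $$ (i,s) * mat_adjoint K $$ (s,j))"
    using K X i j mat_adjoint_carrier[OF K] by (subst index_mult_mat_sum) auto
  also have "\<dots> = (\<Sum>s<d. (\<Sum>r<d. K $$ (i,r) * X $$ (r,s)) * cnj (K $$ (j,s)))"
  proof (intro sum.cong refl)
    fix s assume s: "s \<in> {..<d}"
    have "(K * X) $$ (i,s) = (\<Sum>r<d. K $$ (i,r) * X $$ (r,s))"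
      using K X i s by (subst index_mult_mat_sum) auto
    moreover have "mat_adjoint K $$ (s,j) = cnj (K $$ (j,s))"
      using K s j by (subst index_mat_adjoint) auto
    ultimately show "(K * X) $$ (i,s) * mat_adjoint K $$ (s,j)
        = (\<Sum>r<d. K $$ (i,r) * X $$ (r,s)) * cnj (K $$ (j,s))"
      by simp
  qed
  also have "\<dots> = sesq_form d (\<lambda>r. K $$ (i,r)) X (\<lambda>s. K $$ (j,s))"
    unfolding sesq_form_def by (subst sum.swap) (simp add: sum_distrib_right)
  finally show ?thesis .
qed

lemma index_kraus_sum:
  assumes "set Ks \<subseteq> carrier_mat n d" and X: "X \<in> carrier_mat d d" and ij: "i < n" "j < n"
  shows "kraus_sum n Ks X $$ (i,j) = (\<Sum>K\<leftarrow>Ks. sesq_form d (\<lambda>r. K $$ (i,r)) X (\<lambda>s. K $$ (j,s)))"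
  using assms(1)
proof (induction Ks)
  case (Cons K Ks)
  then have K: "K \<in> carrier_mat n d" and Ks: "set Ks \<subseteq> carrier_mat n d" by auto
  have "kraus_sum n (K # Ks) X $$ (i,j) = (K * X * mat_adjoint K) $$ (i,j) + kraus_sum n Ks X $$ (i,j)"
    using kraus_sum_carrier[OF Ks X] ij by simp
  with Cons.IH[OF Ks] show ?case by (simp add: index_kraus_term[OF K X ij])
qed (use ij in simp)

lemma sesq_form_rank_one:
  "sesq_form d x (mat d d (\<lambda>(r,s). y r * cnj (y s))) z = (\<Sum>r<d. x r * y r) * cnj (\<Sum>s<d. z s * y s)"
  unfolding sesq_form_def by (simp add: sum_product algebra_simps)

lemma sesq_form_scale:
  "sesq_form d (\<lambda>r. \<mu> * x r) X (\<lambda>s. \<nu> * y s) = \<mu> * cnj \<nu> * sesq_form d x X y"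
  unfolding sesq_form_def by (simp add: sum_distrib_left algebra_simps)

lemma sesq_form_one: "sesq_form d x (1\<^sub>m d) y = (\<Sum>r<d. x r * cnj (y r))"
proof -
  have "(\<Sum>s<d. x r * 1\<^sub>m d $$ (r,s) * cnj (y s)) = x r * cnj (y r)" if "r < d" for r
  proof -
    have "(\<Sum>s<d. x r * 1\<^sub>m d $$ (r,s) * cnj (y s)) = (\<Sum>s<d. if s = r then x r * cnj (y s) else 0)"
      using that by (intro sum.cong) auto
    then show ?thesis using that by simp
  qed
  then show ?thesis unfolding sesq_form_def by simp
qed

section \<open>Maps with one Kraus operator per output row\<close>

definition row_kraus_ops :: "nat \<Rightarrow> nat \<Rightarrow> (nat \<Rightarrow> nat \<Rightarrow> complex) \<Rightarrow> complex mat list" where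
  "row_kraus_ops n d v = map (\<lambda>a. mat n d (\<lambda>(i,r). if i = a then v a r else 0)) [0..<n]"

definition diag_kraus_map :: "nat \<Rightarrow> nat \<Rightarrow> (nat \<Rightarrow> nat \<Rightarrow> complex) \<Rightarrow> complex mat \<Rightarrow> complex mat" where
  "diag_kraus_map n d v X = kraus_sum n (row_kraus_ops n d v) X"

lemma row_kraus_ops_carrier: "set (row_kraus_ops n d v) \<subseteq> carrier_mat n d"
  unfolding row_kraus_ops_def by auto

lemma completely_positive_diag_kraus_map: "completely_positive d n (diag_kraus_map n d v)"
  unfolding completely_positive_def diag_kraus_map_def using row_kraus_ops_carrier by blast

lemma diag_kraus_map_carrier: "X \<in> carrier_mat d d \<Longrightarrow> diag_kraus_map n d v X \<in> carrier_mat n n"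
  unfolding diag_kraus_map_def by (rule kraus_sum_carrier[OF row_kraus_ops_carrier])

lemma index_diag_kraus_map:
  assumes X: "X \<in> carrier_mat d d" and i: "i < n" and j: "j < n"
  shows "diag_kraus_map n d v X $$ (i,j) = (if i = j then sesq_form d (v i) X (v i) else 0)"
proof -
  have "diag_kraus_map n d v X $$ (i,j)
      = (\<Sum>a<n. sesq_form d (\<lambda>r. mat n d (\<lambda>(k,r). if k = a then v a r else 0) $$ (i,r)) X
                             (\<lambda>s. mat n d (\<lambda>(k,r). if k = a then v a r else 0) $$ (j,s)))"
    unfolding diag_kraus_map_def index_kraus_sum[OF row_kraus_ops_carrier X i j]
    by (simp add: row_kraus_ops_def interv_sum_list_conv_sum_set_nat atLeast0LessThan)
  also have "\<dots> = (\<Sum>a<n. if a = i then (if i = j then sesq_form d (v i) X (v i) else 0) else 0)"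
    using i j by (intro sum.cong refl) (auto simp: sesq_form_def)
  finally show ?thesis using i by simp
qed

lemma diag_kraus_map_one:
  assumes "\<And>a. a < n \<Longrightarrow> (\<Sum>r<d. v a r * cnj (v a r)) = c"
  shows "diag_kraus_map n d v (1\<^sub>m d) = c \<cdot>\<^sub>m 1\<^sub>m n"
  using diag_kraus_map_carrier[of "1\<^sub>m d" d n v]
  by (intro eq_matI) (auto simp: index_diag_kraus_map sesq_form_one assms)

lemma hs_adjoint_at_identity_diag_kraus_map:
  assumes A: "A \<in> carrier_mat d d"
    and A_entries: "\<And>r s. r < d \<Longrightarrow> s < d \<Longrightarrow> A $$ (r,s) = (\<Sum>a<n. cnj (v a r) * v a s)"
  shows "hs_adjoint_at_identity d (diag_kraus_map n d v) A"
  unfolding hs_adjoint_at_identity_def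
proof
  fix X :: "complex mat" assume X: "X \<in> carrier_mat d d"
  have "mtrace (mat_adjoint A * X) = (\<Sum>s<d. \<Sum>r<d. cnj (A $$ (r,s)) * X $$ (r,s))"
    unfolding mtrace_def using A X mat_adjoint_carrier[OF A]
    by (intro sum.cong) (auto simp: index_mult_mat_sum index_mat_adjoint simp del: index_mult_mat(1))
  also have "\<dots> = (\<Sum>s<d. \<Sum>r<d. \<Sum>a<n. v a r * X $$ (r,s) * cnj (v a s))"
    by (intro sum.cong refl) (simp add: A_entries sum_distrib_left sum_distrib_right mult_ac)
  also have "\<dots> = (\<Sum>a<n. \<Sum>s<d. \<Sum>r<d. v a r * X $$ (r,s) * cnj (v a s))"
    by (simp only: sum.swap[of _ _ "{..<n}"])
  also have "\<dots> = (\<Sum>a<n. sesq_form d (v a) X (v a))"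
    unfolding sesq_form_def by (rule sum.cong[OF refl], rule sum.swap)
  also have "\<dots> = mtrace (diag_kraus_map n d v X)"
    unfolding mtrace_def using diag_kraus_map_carrier[OF X, of n v] by (simp add: index_diag_kraus_map[OF X])
  finally show "mtrace (mat_adjoint A * X) = mtrace (diag_kraus_map n d v X)" .
qed

lemma index_kraus_sum_rank_one:
  assumes "set Ls \<subseteq> carrier_mat n d" and "a < n"
  shows "kraus_sum n Ls (mat d d (\<lambda>(r,s). y r * cnj (y s))) $$ (a,a)
       = of_real (\<Sum>K\<leftarrow>Ls. (cmod (\<Sum>r<d. K $$ (a,r) * y r))\<^sup>2)"
proof -
  have "kraus_sum n Ls (mat d d (\<lambda>(r,s). y r * cnj (y s))) $$ (a,a)
      = (\<Sum>K\<leftarrow>Ls. (\<Sum>r<d. K $$ (a,r) * y r) * cnj (\<Sum>r<d. K $$ (a,r) * y r))"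
    by (simp only: index_kraus_sum[OF assms(1) _ assms(2) assms(2)] mat_carrier sesq_form_rank_one)
  also have "\<dots> = (\<Sum>K\<leftarrow>Ls. of_real ((cmod (\<Sum>r<d. K $$ (a,r) * y r))\<^sup>2))"
    by (simp only: complex_norm_square)
  finally show ?thesis
    using sum_list_of_real[of "map (\<lambda>K. (cmod (\<Sum>r<d. K $$ (a,r) * y r))\<^sup>2) Ls"] by (simp add: o_def)
qed

lemma kraus_ops_rows_proportional:
  assumes Ls1: "set Ls1 \<subseteq> carrier_mat n d" and Ls2: "set Ls2 \<subseteq> carrier_mat n d"
    and t: "0 < t" "t < 1"
    and decomp: "\<And>X. X \<in> carrier_mat d d \<Longrightarrow> diag_kraus_map n d v X
        = of_real t \<cdot>\<^sub>m kraus_sum n Ls1 X + of_real (1 - t) \<cdot>\<^sub>m kraus_sum n Ls2 X"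
    and L: "L \<in> set Ls1 \<union> set Ls2" and a: "a < n" and j: "j < d"
  shows "L $$ (a,j) * v a 0 = L $$ (a,0) * v a j"
proof (cases "j = 0")
  case False
  define y where "y r = (if r = j then v a 0 else 0) - (if r = 0 then v a j else 0)" for r
  define Y where "Y = mat d d (\<lambda>(r,s). y r * cnj (y s))"
  define S where "S Ls = (\<Sum>K\<leftarrow>Ls. (cmod (\<Sum>r<d. K $$ (a,r) * y r))\<^sup>2)" for Ls
  have Y: "Y \<in> carrier_mat d d" unfolding Y_def by simp
  have pair: "(\<Sum>r<d. f r * y r) = f j * v a 0 - f 0 * v a j" for f
    unfolding y_def using j by (simp add: right_diff_distrib sum_subtractf sum_mult_delta)
  have "diag_kraus_map n d v Y $$ (a,a) = sesq_form d (v a) Y (v a)"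
    by (simp add: index_diag_kraus_map[OF Y a a])
  also have "\<dots> = 0"
    using pair[of "v a"] by (simp add: Y_def sesq_form_rank_one mult.commute)
  finally have "diag_kraus_map n d v Y $$ (a,a) = 0" .
  moreover have "diag_kraus_map n d v Y $$ (a,a) = of_real (t * S Ls1 + (1 - t) * S Ls2)"
    using decomp[OF Y] kraus_sum_carrier[OF Ls1 Y] kraus_sum_carrier[OF Ls2 Y] a
    by (simp add: Y_def S_def index_kraus_sum_rank_one[OF Ls1 a] index_kraus_sum_rank_one[OF Ls2 a])
  ultimately have "t * S Ls1 + (1 - t) * S Ls2 = 0"
    by (metis of_real_eq_0_iff)
  moreover have "S Ls1 \<ge> 0" "S Ls2 \<ge> 0" unfolding S_def by (auto intro!: sum_list_nonneg)
  ultimately have "S Ls1 = 0" "S Ls2 = 0" using t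
    by (smt (verit) mult_nonneg_nonneg mult_pos_pos)+
  moreover have "(\<Sum>r<d. K $$ (a,r) * y r) = 0" if "S Ls = 0" and "K \<in> set Ls" for Ls K
  proof -
    have "\<forall>x\<in>set (map (\<lambda>K. (cmod (\<Sum>r<d. K $$ (a,r) * y r))\<^sup>2) Ls). x = 0"
      using that(1) unfolding S_def by (subst (asm) sum_list_nonneg_eq_0_iff) auto
    then show ?thesis using that(2) by auto
  qed
  ultimately have "(\<Sum>r<d. L $$ (a,r) * y r) = 0"
    using L by blast
  then show ?thesis using pair[of "\<lambda>r. L $$ (a,r)"] by simp
qed simp

lemma index_kraus_sum_proportional_rows:
  assumes Ls: "set Ls \<subseteq> carrier_mat n d" and X: "X \<in> carrier_mat d d" and a: "a < n" and b: "b < n"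
    and rows: "\<And>L c r. L \<in> set Ls \<Longrightarrow> c < n \<Longrightarrow> r < d \<Longrightarrow> L $$ (c,r) = \<mu> L c * v c r"
  shows "kraus_sum n Ls X $$ (a,b) = (\<Sum>L\<leftarrow>Ls. \<mu> L a * cnj (\<mu> L b)) * sesq_form d (v a) X (v b)"
proof -
  have "sesq_form d (\<lambda>r. L $$ (a,r)) X (\<lambda>s. L $$ (b,s)) = \<mu> L a * cnj (\<mu> L b) * sesq_form d (v a) X (v b)"
    if L: "L \<in> set Ls" for L
  proof -
    have "sesq_form d (\<lambda>r. L $$ (a,r)) X (\<lambda>s. L $$ (b,s))
        = sesq_form d (\<lambda>r. \<mu> L a * v a r) X (\<lambda>s. \<mu> L b * v b s)"
      unfolding sesq_form_def using rows[OF L] a b by simp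
    then show ?thesis by (simp only: sesq_form_scale)
  qed
  then show ?thesis
    by (simp add: index_kraus_sum[OF Ls X a b] sum_list_mult_const cong: map_cong)
qed

lemma kraus_sum_eq_diag_kraus_map:
  assumes Ls: "set Ls \<subseteq> carrier_mat n d"
    and rows: "\<And>L c r. L \<in> set Ls \<Longrightarrow> c < n \<Longrightarrow> r < d \<Longrightarrow> L $$ (c,r) = \<mu> L c * v c r"
    and gram: "\<And>a b. a < n \<Longrightarrow> b < n \<Longrightarrow> (\<Sum>r<d. v a r * cnj (v b r)) \<noteq> 0"
    and unit: "kraus_sum n Ls (1\<^sub>m d) = diag_kraus_map n d v (1\<^sub>m d)"
    and X: "X \<in> carrier_mat d d"
  shows "kraus_sum n Ls X = diag_kraus_map n d v X"
proof (rule eq_matI)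
  define M where "M a b = (\<Sum>L\<leftarrow>Ls. \<mu> L a * cnj (\<mu> L b))" for a b
  have M: "M a b = (if a = b then 1 else 0)" if ab: "a < n" "b < n" for a b
  proof -
    have "M a b * (\<Sum>r<d. v a r * cnj (v b r)) = (if a = b then (\<Sum>r<d. v a r * cnj (v b r)) else 0)"
      using arg_cong[OF unit, of "\<lambda>A. A $$ (a,b)"] ab
      by (simp add: M_def index_kraus_sum_proportional_rows[OF Ls _ ab rows] index_diag_kraus_map
          sesq_form_one)
    then show ?thesis using gram[OF ab] by (auto split: if_splits)
  qed
  fix a b assume "a < dim_row (diag_kraus_map n d v X)" and "b < dim_col (diag_kraus_map n d v X)"
  then have a: "a < n" and b: "b < n" using diag_kraus_map_carrier[OF X, of n v] by auto
  show "kraus_sum n Ls X $$ (a,b) = diag_kraus_map n d v X $$ (a,b)"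
    using M[OF a b] by (simp add: index_kraus_sum_proportional_rows[OF Ls X a b rows]
        index_diag_kraus_map[OF X a b] M_def)
qed (use kraus_sum_carrier[OF Ls X] diag_kraus_map_carrier[OF X, of n v] in auto)

lemma extreme_point_diag_kraus_map:
  assumes first: "\<And>a. a < n \<Longrightarrow> v a 0 \<noteq> 0"
    and gram: "\<And>a b. a < n \<Longrightarrow> b < n \<Longrightarrow> (\<Sum>r<d. v a r * cnj (v b r)) \<noteq> 0"
  shows "extreme_point_maps d {\<Phi>. completely_positive d n \<Phi> \<and> \<Phi> (1\<^sub>m d) = diag_kraus_map n d v (1\<^sub>m d)}
           (diag_kraus_map n d v)" (is "extreme_point_maps d ?K _")
  unfolding extreme_point_maps_def
proof (intro conjI ballI allI impI)
  show "diag_kraus_map n d v \<in> ?K" using completely_positive_diag_kraus_map by simp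
  fix \<Phi>1 \<Phi>2 t and X :: "complex mat"
  assume \<Phi>1: "\<Phi>1 \<in> ?K" and \<Phi>2: "\<Phi>2 \<in> ?K" and X: "X \<in> carrier_mat d d"
    and hyp: "0 < t \<and> t < 1 \<and> (\<forall>X\<in>carrier_mat d d.
       diag_kraus_map n d v X = of_real t \<cdot>\<^sub>m \<Phi>1 X + of_real (1 - t) \<cdot>\<^sub>m \<Phi>2 X)"
  obtain Ls1 where Ls1: "set Ls1 \<subseteq> carrier_mat n d" and E1: "\<forall>X\<in>carrier_mat d d. \<Phi>1 X = kraus_sum n Ls1 X"
    using \<Phi>1 unfolding completely_positive_def by auto
  obtain Ls2 where Ls2: "set Ls2 \<subseteq> carrier_mat n d" and E2: "\<forall>X\<in>carrier_mat d d. \<Phi>2 X = kraus_sum n Ls2 X"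
    using \<Phi>2 unfolding completely_positive_def by auto
  have t: "0 < t" "t < 1" using hyp by auto
  have decomp: "diag_kraus_map n d v Y
      = of_real t \<cdot>\<^sub>m kraus_sum n Ls1 Y + of_real (1 - t) \<cdot>\<^sub>m kraus_sum n Ls2 Y"
    if "Y \<in> carrier_mat d d" for Y
    using hyp E1 E2 that by simp
  have "kraus_sum n Ls X = diag_kraus_map n d v X"
    if Ls: "Ls = Ls1 \<or> Ls = Ls2" "set Ls \<subseteq> carrier_mat n d"
      and unit: "kraus_sum n Ls (1\<^sub>m d) = diag_kraus_map n d v (1\<^sub>m d)" for Ls
  proof -
    have "L $$ (c,r) = L $$ (c,0) / v c 0 * v c r" if "L \<in> set Ls" "c < n" "r < d" for L c r
    proof -
      have "L $$ (c,r) * v c 0 = L $$ (c,0) * v c r"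
        using kraus_ops_rows_proportional[OF Ls1 Ls2 t decomp] Ls(1) that by blast
      then show ?thesis using first[OF that(2)] by (simp add: field_simps)
    qed
    then show ?thesis by (rule kraus_sum_eq_diag_kraus_map[OF Ls(2) _ gram unit X])
  qed
  moreover have "kraus_sum n Ls1 (1\<^sub>m d) = diag_kraus_map n d v (1\<^sub>m d)"
    "kraus_sum n Ls2 (1\<^sub>m d) = diag_kraus_map n d v (1\<^sub>m d)"
    using \<Phi>1 \<Phi>2 E1 E2 by auto
  ultimately show "\<Phi>1 X = diag_kraus_map n d v X" and "\<Phi>2 X = diag_kraus_map n d v X"
    using Ls1 Ls2 E1 E2 X by auto
qed

lemma extreme_point_maps_subset:
  assumes "extreme_point_maps d K \<Phi>" and "\<Phi> \<in> K'" and "K' \<subseteq> K"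
  shows "extreme_point_maps d K' \<Phi>"
  using assms unfolding extreme_point_maps_def by blast

section \<open>Choi rank\<close>

lemma rank_le_sum_of_products:
  fixes A :: "'a::field mat" and f g :: "nat \<Rightarrow> nat \<Rightarrow> 'a"
  assumes "A \<in> carrier_mat N M"
    and "\<And>i j. i < N \<Longrightarrow> j < M \<Longrightarrow> A $$ (i,j) = (\<Sum>a<k. f a i * g a j)"
  shows "vec_space.rank N A \<le> k"
  using assms
proof (induction k arbitrary: A)
  case 0
  then have "A = 0\<^sub>m N M" by (intro eq_matI) auto
  then show ?case using vec_space.rank_0I by simp
next
  case (Suc k)
  define B where "B = mat N M (\<lambda>(i,j). f k i * g k j)"
  define C where "C = mat N M (\<lambda>(i,j). \<Sum>a<k. f a i * g a j)"
  have B: "B \<in> carrier_mat N M" and C: "C \<in> carrier_mat N M" unfolding B_def C_def by auto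
  have "A = B + C" using Suc.prems by (intro eq_matI) (auto simp: B_def C_def)
  moreover have "vec_space.rank N B \<le> 1"
    by (rule vec_space.rank_le_1_product_entries[OF B, of "f k" "g k"]) (simp add: B_def)
  moreover have "vec_space.rank N C \<le> k" by (rule Suc.IH[OF C]) (simp add: C_def)
  ultimately show ?case using vec_space.rank_subadditive[OF B C] by simp
qed

lemma pick_lessThan: "i < n \<Longrightarrow> pick {..<n} i = i"
  using pick_card_in_set[of i "{..<n}"] by (simp add: Collect_conj_eq lessThan_def[symmetric] Int_absorb1)

lemma sesq_form_mat_unit:
  assumes "r < d" and "s < d"
  shows "sesq_form d x (mat_unit d r s) y = x r * cnj (y s)"
proof -
  have "x r' * mat_unit d r s $$ (r',s') * cnj (y s')
      = (if s' = s then if r' = r then x r * cnj (y s) else 0 else 0)" if "r' < d" "s' < d" for r' s'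
    using that by (simp add: mat_unit_def)
  then show ?thesis using assms by (simp add: sesq_form_def)
qed

lemma index_choi_matrix_diag_kraus_map:
  assumes "i < d * n" and "j < d * n"
  shows "choi_matrix d n (diag_kraus_map n d v) $$ (i,j)
       = (if i mod n = j mod n then v (i mod n) (i div n) * cnj (v (i mod n) (j div n)) else 0)"
proof -
  have n: "0 < n" using assms by (cases n) auto
  have "i div n < d" "j div n < d" using assms by (auto simp: less_mult_imp_div_less)
  moreover have "mat_unit d (i div n) (j div n) \<in> carrier_mat d d" unfolding mat_unit_def by simp
  ultimately show ?thesis
    unfolding choi_matrix_def using assms n
    by (simp add: index_diag_kraus_map sesq_form_mat_unit)
qed

lemma rank_choi_matrix_diag_kraus_map_le:
  "vec_space.rank (d * n) (choi_matrix d n (diag_kraus_map n d v)) \<le> n"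
proof -
  let ?C = "choi_matrix d n (diag_kraus_map n d v)"
  have C: "?C \<in> carrier_mat (d * n) (d * n)" unfolding choi_matrix_def by simp
  define w where "w a i = (if i mod n = a then v a (i div n) else 0)" for a i
  show ?thesis
  proof (rule rank_le_sum_of_products[OF C, where f = w and g = "\<lambda>a j. cnj (w a j)"])
    fix i j assume ij: "i < d * n" "j < d * n"
    then have "i mod n < n" by (cases n) auto
    moreover have "(\<Sum>a<n. w a i * cnj (w a j)) = (\<Sum>a<n. if a = i mod n then
        (if i mod n = j mod n then v a (i div n) * cnj (v a (j div n)) else 0) else 0)"
      by (intro sum.cong) (auto simp: w_def)
    ultimately show "?C $$ (i,j) = (\<Sum>a<n. w a i * cnj (w a j))"
      by (simp add: index_choi_matrix_diag_kraus_map[OF ij])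
  qed
qed

lemma rank_choi_matrix_diag_kraus_map_ge:
  assumes d: "0 < d" and first: "\<And>a. a < n \<Longrightarrow> v a 0 \<noteq> 0"
  shows "n \<le> vec_space.rank (d * n) (choi_matrix d n (diag_kraus_map n d v))"
proof -
  let ?C = "choi_matrix d n (diag_kraus_map n d v)"
  have C: "?C \<in> carrier_mat (d * n) (d * n)" unfolding choi_matrix_def by simp
  define S where "S = submatrix ?C {..<n} {..<n}"
  have n_le: "n \<le> d * n" using d by simp
  have "{i. i < d * n \<and> i \<in> {..<n}} = {..<n}" using n_le by (auto intro: less_le_trans)
  then have card: "card {i. i < d * n \<and> i \<in> {..<n}} = n" by simp
  have dim_C: "dim_row ?C = d * n" "dim_col ?C = d * n" using C by auto
  have S: "S \<in> carrier_mat n n"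
    by (rule carrier_matI) (simp_all only: S_def dim_submatrix dim_C card)
  have S_entries: "S $$ (i,j) = (if i = j then v i 0 * cnj (v i 0) else 0)" if "i < n" "j < n" for i j
  proof -
    have "S $$ (i,j) = ?C $$ (i,j)"
      unfolding S_def using that by (subst submatrix_index) (simp_all only: dim_C card pick_lessThan)
    then show ?thesis
      using that n_le by (simp add: index_choi_matrix_diag_kraus_map)
  qed
  have "det S = prod_list (diag_mat S)"
    by (rule det_upper_triangular[OF _ S]) (use S S_entries in \<open>auto simp: upper_triangular_def\<close>)
  also have "\<dots> \<noteq> 0"
    using S S_entries first by (auto simp: diag_mat_def prod_list_zero_iff)
  finally show ?thesis
    using vec_space.rank_gt_minor[OF C, of "{..<n}" "{..<n}"] card unfolding S_def by simp
qed

lemma choi_rank_diag_kraus_map: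
  "0 < d \<Longrightarrow> (\<And>a. a < n \<Longrightarrow> v a 0 \<noteq> 0) \<Longrightarrow> choi_rank d n (diag_kraus_map n d v) = n"
  unfolding choi_rank_def
  using rank_choi_matrix_diag_kraus_map_le rank_choi_matrix_diag_kraus_map_ge by (metis le_antisym)

section \<open>A regular simplex\<close>

definition simplex_alpha :: "nat \<Rightarrow> real" where
  "simplex_alpha d = sqrt ((real d + 1) / real d)"

definition simplex_gamma :: "nat \<Rightarrow> real" where
  "simplex_gamma d = 1 / sqrt (real d)"

definition simplex_beta :: "nat \<Rightarrow> real" where
  "simplex_beta d = (simplex_gamma d - simplex_alpha d) / real d"

definition simplex_vec :: "nat \<Rightarrow> nat \<Rightarrow> nat \<Rightarrow> real" where
  "simplex_vec d a r =
     (if a < d then (if r = a then simplex_alpha d else 0) + simplex_beta d else simplex_gamma d)"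

lemma simplex_alpha_square: "0 < d \<Longrightarrow> (simplex_alpha d)\<^sup>2 = (real d + 1) / real d"
  unfolding simplex_alpha_def by simp

lemma simplex_gamma_square: "0 < d \<Longrightarrow> (simplex_gamma d)\<^sup>2 = 1 / real d"
  unfolding simplex_gamma_def by (simp add: power_divide)

lemma simplex_gamma_pos: "0 < d \<Longrightarrow> simplex_gamma d > 0"
  unfolding simplex_gamma_def by simp

lemma simplex_alpha_beta_gamma: "0 < d \<Longrightarrow> simplex_alpha d + real d * simplex_beta d = simplex_gamma d"
  unfolding simplex_beta_def by simp

lemma simplex_cross_terms:
  assumes "0 < d"
  shows "2 * simplex_alpha d * simplex_beta d + real d * (simplex_beta d)\<^sup>2 = - 1 / real d"
proof -
  have "real d * (2 * simplex_alpha d * simplex_beta d + real d * (simplex_beta d)\<^sup>2)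
      = (simplex_alpha d + real d * simplex_beta d)\<^sup>2 - (simplex_alpha d)\<^sup>2"
    by (simp add: power2_eq_square algebra_simps)
  also have "\<dots> = (simplex_gamma d)\<^sup>2 - (simplex_alpha d)\<^sup>2"
    by (simp only: simplex_alpha_beta_gamma[OF assms])
  also have "\<dots> = - 1"
    using assms by (simp add: simplex_alpha_square simplex_gamma_square field_simps)
  finally show ?thesis using assms by (simp add: field_simps)
qed

lemma simplex_beta_nonzero: "0 < d \<Longrightarrow> simplex_beta d \<noteq> 0"
  using simplex_alpha_beta_gamma[of d] simplex_alpha_square[of d] simplex_gamma_square[of d]
  by (auto simp: field_simps)

lemma simplex_alpha_beta_pos: "0 < d \<Longrightarrow> simplex_alpha d + simplex_beta d > 0"
proof -
  assume d: "0 < d"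
  have "simplex_alpha d + simplex_beta d = ((real d - 1) * simplex_alpha d + simplex_gamma d) / real d"
    using d unfolding simplex_beta_def by (simp add: field_simps)
  moreover have "(real d - 1) * simplex_alpha d \<ge> 0"
    using d unfolding simplex_alpha_def by simp
  ultimately show ?thesis using simplex_gamma_pos[OF d] d by simp
qed

lemma sum_shifted_delta_products:
  fixes x y :: real
  assumes "a < d" and "b < d"
  shows "(\<Sum>r<d. ((if r = a then x else 0) + y) * ((if r = b then x else 0) + y))
       = (if a = b then x\<^sup>2 else 0) + (2 * x * y + real d * y\<^sup>2)"
proof -
  have "(\<Sum>r<d. ((if r = a then x else 0) + y) * ((if r = b then x else 0) + y))
      = (\<Sum>r<d. (if r = a then (if a = b then x\<^sup>2 else 0) + x * y else 0)
                 + (if r = b then x * y else 0) + y\<^sup>2)"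
    by (intro sum.cong) (auto simp: algebra_simps power2_eq_square)
  then show ?thesis using assms by (simp add: sum.distrib)
qed

lemma simplex_vec_inner:
  assumes "0 < d"
  shows "(\<Sum>r<d. simplex_vec d a r * simplex_vec d b r)
       = (if a = b \<or> d \<le> a \<and> d \<le> b then 1 else if a < d \<and> b < d then - 1 / real d else 1 / real d)"
proof -
  have mixed: "(\<Sum>r<d. simplex_vec d c r * simplex_gamma d) = 1 / real d" if "c < d" for c
  proof -
    have "(\<Sum>r<d. simplex_vec d c r * simplex_gamma d)
        = (\<Sum>r<d. (if r = c then simplex_alpha d * simplex_gamma d else 0) + simplex_beta d * simplex_gamma d)"
      using that by (intro sum.cong) (auto simp: simplex_vec_def algebra_simps)
    also have "\<dots> = (simplex_alpha d + real d * simplex_beta d) * simplex_gamma d"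
      using that by (simp add: sum.distrib algebra_simps)
    finally show ?thesis
      using simplex_gamma_square[OF assms] simplex_alpha_beta_gamma[OF assms] by (simp add: power2_eq_square)
  qed
  consider "a < d" "b < d" | "a < d" "d \<le> b" | "d \<le> a" "b < d" | "d \<le> a" "d \<le> b" by linarith
  then show ?thesis
  proof cases
    case 1
    have "(\<Sum>r<d. simplex_vec d a r * simplex_vec d b r)
        = (\<Sum>r<d. ((if r = a then simplex_alpha d else 0) + simplex_beta d)
                 * ((if r = b then simplex_alpha d else 0) + simplex_beta d))"
      using 1 by (simp add: simplex_vec_def)
    also have "\<dots> = (if a = b then (simplex_alpha d)\<^sup>2 else 0) - 1 / real d"
      using simplex_cross_terms[OF assms] by (simp add: sum_shifted_delta_products[OF 1])
    finally have "(\<Sum>r<d. simplex_vec d a r * simplex_vec d b r)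
        = (if a = b then (simplex_alpha d)\<^sup>2 else 0) - 1 / real d" .
    moreover have "(simplex_alpha d)\<^sup>2 - 1 / real d = 1"
      using simplex_alpha_square[OF assms] assms by (simp add: field_simps)
    ultimately show ?thesis using 1 by auto
  next
    case 2
    then show ?thesis using mixed[of a] by (simp add: simplex_vec_def)
  next
    case 3
    then show ?thesis using mixed[of b] by (simp add: simplex_vec_def mult.commute)
  next
    case 4
    then show ?thesis
      using simplex_gamma_square[OF assms] assms by (simp add: simplex_vec_def power2_eq_square)
  qed
qed

lemma simplex_vec_outer_sum:
  assumes "0 < d" and "r < d" and "s < d"
  shows "(\<Sum>a<d + m. simplex_vec d a r * simplex_vec d a s)
       = (if r = s then (real d + 1) / real d else 0) + (real m - 1) / real d"
proof -
  have split: "{..<d + m} = {..<d} \<union> {d..<d + m}" by auto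
  have "(\<Sum>a<d + m. simplex_vec d a r * simplex_vec d a s)
      = (\<Sum>a<d. simplex_vec d a r * simplex_vec d a s) + (\<Sum>a\<in>{d..<d + m}. simplex_vec d a r * simplex_vec d a s)"
    unfolding split by (rule sum.union_disjoint) auto
  also have "(\<Sum>a<d. simplex_vec d a r * simplex_vec d a s)
      = (\<Sum>a<d. ((if a = r then simplex_alpha d else 0) + simplex_beta d)
                 * ((if a = s then simplex_alpha d else 0) + simplex_beta d))"
    by (intro sum.cong) (auto simp: simplex_vec_def)
  also have "(\<Sum>a\<in>{d..<d + m}. simplex_vec d a r * simplex_vec d a s) = real m * (simplex_gamma d)\<^sup>2"
    by (simp add: simplex_vec_def power2_eq_square)
  also have "(\<Sum>a<d. ((if a = r then simplex_alpha d else 0) + simplex_beta d)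
                 * ((if a = s then simplex_alpha d else 0) + simplex_beta d))
      = (if r = s then (simplex_alpha d)\<^sup>2 else 0) - 1 / real d"
    using simplex_cross_terms[OF assms(1)] by (simp add: sum_shifted_delta_products[OF assms(2,3)])
  finally show ?thesis
    using simplex_alpha_square[OF assms(1)] simplex_gamma_square[OF assms(1)] assms(1) by (simp add: field_simps)
qed

lemma simplex_vec_first_nonzero: "0 < d \<Longrightarrow> simplex_vec d a 0 \<noteq> 0"
  using simplex_beta_nonzero[of d] simplex_alpha_beta_pos[of d] simplex_gamma_pos[of d]
  by (auto simp: simplex_vec_def)

definition kraus_vec :: "nat \<Rightarrow> nat \<Rightarrow> nat \<Rightarrow> nat \<Rightarrow> complex" where
  "kraus_vec d m a r = complex_of_real (simplex_vec d a r / sqrt (real (d + m)))"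

lemma kraus_vec_mult_cnj:
  "kraus_vec d m a r * cnj (kraus_vec d m b s) = of_real (simplex_vec d a r * simplex_vec d b s / real (d + m))"
  unfolding kraus_vec_def by (simp del: of_real_mult add: of_real_mult[symmetric] times_divide_times_eq)

lemma kraus_vec_inner:
  "(\<Sum>r<d. kraus_vec d m a r * cnj (kraus_vec d m b r))
     = of_real ((\<Sum>r<d. simplex_vec d a r * simplex_vec d b r) / real (d + m))"
  by (simp only: kraus_vec_mult_cnj sum_divide_distrib of_real_sum)

lemma kraus_vec_first_nonzero: "0 < d \<Longrightarrow> kraus_vec d m a 0 \<noteq> 0"
  unfolding kraus_vec_def using simplex_vec_first_nonzero by simp

lemma kraus_vec_inner_nonzero: "0 < d \<Longrightarrow> (\<Sum>r<d. kraus_vec d m a r * cnj (kraus_vec d m b r)) \<noteq> 0"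
  unfolding kraus_vec_inner of_real_eq_0_iff using simplex_vec_inner[of d a b] by simp

lemma kraus_vec_norm: "0 < d \<Longrightarrow> (\<Sum>r<d. kraus_vec d m a r * cnj (kraus_vec d m a r)) = of_real (1 / real (d + m))"
  unfolding kraus_vec_inner using simplex_vec_inner[of d a a] by simp

lemma kraus_vec_outer_sum:
  fixes d m :: nat
  assumes "0 < d" and "r < d" and "s < d"
  defines "p \<equiv> (real d + 1) / (real d + real m)"
  shows "(\<Sum>a<d + m. cnj (kraus_vec d m a r) * kraus_vec d m a s)
       = of_real ((if r = s then p / real d else 0) + (1 - p) / real d)"
proof -
  have "(\<Sum>a<d + m. cnj (kraus_vec d m a r) * kraus_vec d m a s)
      = of_real ((\<Sum>a<d + m. simplex_vec d a r * simplex_vec d a s) / real (d + m))"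
    using kraus_vec_mult_cnj[of d m _ s _ r]
    by (simp only: mult.commute[of "cnj _"] sum_divide_distrib of_real_sum mult.commute[of "simplex_vec d _ s"])
  also have "\<dots> = of_real (((if r = s then (real d + 1) / real d else 0) + (real m - 1) / real d) / real (d + m))"
    by (simp only: simplex_vec_outer_sum[OF assms(1-3)])
  also have "((if r = s then (real d + 1) / real d else 0) + (real m - 1) / real d) / real (d + m)
      = (if r = s then p / real d else 0) + (1 - p) / real d"
  proof -
    have "1 - p = (real m - 1) / real (d + m)" unfolding p_def using assms(1) by (simp add: field_simps)
    then show ?thesis unfolding p_def
      by (simp add: add_divide_distrib divide_divide_eq_left mult.commute)
  qed
  finally show ?thesis .
qed

theorem mainTheorem1:
  fixes d m :: nat
  assumes "d \<ge> 2" and "m \<ge> 1"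
  defines "p \<equiv> (real d + 1) / (real d + real m)"
  defines "Z \<equiv> complex_of_real (p / real d) \<cdot>\<^sub>m 1\<^sub>m d
               + complex_of_real ((1 - p) / real d) \<cdot>\<^sub>m all_ones_mat d"
  shows "\<exists>\<Phi>. extreme_point_maps d
                (CP_set d (d + m) Z (complex_of_real (1 / real (d + m)) \<cdot>\<^sub>m 1\<^sub>m (d + m))) \<Phi>
              \<and> choi_rank d (d + m) \<Phi> = d + m"
proof -
  have d: "0 < d" using assms(1) by simp
  let ?v = "kraus_vec d m"
  have first: "?v a 0 \<noteq> 0" for a by (rule kraus_vec_first_nonzero[OF d])
  have gram: "(\<Sum>r<d. ?v a r * cnj (?v b r)) \<noteq> 0" for a b by (rule kraus_vec_inner_nonzero[OF d])
  have unit: "diag_kraus_map (d + m) d ?v (1\<^sub>m d) = complex_of_real (1 / real (d + m)) \<cdot>\<^sub>m 1\<^sub>m (d + m)"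
    by (rule diag_kraus_map_one) (rule kraus_vec_norm[OF d])
  have "hs_adjoint_at_identity d (diag_kraus_map (d + m) d ?v) Z"
  proof (rule hs_adjoint_at_identity_diag_kraus_map)
    show "Z \<in> carrier_mat d d" unfolding Z_def all_ones_mat_def by simp
    fix r s assume "r < d" "s < d"
    then show "Z $$ (r,s) = (\<Sum>a<d + m. cnj (?v a r) * ?v a s)"
      by (simp add: kraus_vec_outer_sum[OF d] Z_def p_def all_ones_mat_def)
  qed
  with unit have "extreme_point_maps d
      (CP_set d (d + m) Z (complex_of_real (1 / real (d + m)) \<cdot>\<^sub>m 1\<^sub>m (d + m))) (diag_kraus_map (d + m) d ?v)"
    by (intro extreme_point_maps_subset[OF extreme_point_diag_kraus_map[OF first gram]])
      (auto simp: CP_set_def completely_positive_diag_kraus_map)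
  moreover have "choi_rank d (d + m) (diag_kraus_map (d + m) d ?v) = d + m"
    by (rule choi_rank_diag_kraus_map[OF d]) (rule first)
  ultimately show ?thesis by blast
qed

end
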